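(* Let $U,V\in\mathbb{R}^{3\times3}$ be symmetric positive-definite matrices with $U\neq V$ and $UV=VU$, and suppose the eigenvalues $\lambda_1,\lambda_2,\lambda_3$ of $U$ are pairwise distinct. Suppose there is a unit vector $\hat e\in\mathbb{R}^3$ such that $V=(-I+2\,\hat e\otimes\hat e)\,U\,(-I+2\,\hat e\otimes\hat e)$. Then $\hat e$ is perpendicular to an eigenvector of $U$. Consequently $U$ and $V$ form compound domains: there is a unit vector $\hat e'$ with $\hat e'\perp\hat e$ such that $V=(-I+2\,\hat e'\otimes\hat e')\,U\,(-I+2\,\hat e'\otimes\hat e')$ as well.
   Context: $-I+2\hat e\otimes\hat e$ is the rotation by $180^\circ$ about the unit vector $\hat e$. Two distinct symmetric positive-definite matrices $U,V$ are said to form compound domains if there exist two non-parallel unit vectors $\hat e_1,\hat e_2$ with $V=(-I+2\hat e_i\otimes\hat e_i)U(-I+2\hat e_i\otimes\hat e_i)$ for $i=1,2$. A known result used in this setting: if $V=(-I+2\hat e_1\otimes\hat e_1)U(-I+2\hat e_1\otimes\hat e_1)\neq U$, then a second such axis $\hat e_2\nparallel\hat e_1$ exists if and only if $\hat e_1$ is perpendicular to an eigenvector of $U$, in which case $\hat e_1,\hat e_2$ and that eigenvector form an orthonormal basis. *)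

theory Defs
  imports "HOL-Analysis.Analysis"
begin

definition outer :: "real^'n \<Rightarrow> real^'n \<Rightarrow> real^'n^'n" where
  "outer a b = (\<chi> i j. a $ i * b $ j)"

definition rot180 :: "real^'n \<Rightarrow> real^'n^'n" where
  "rot180 e = - mat 1 + 2 *\<^sub>R outer e e"

definition sym_mat :: "real^'n^'n \<Rightarrow> bool" where
  "sym_mat A \<longleftrightarrow> transpose A = A"

definition pos_def_mat :: "real^'n^'n \<Rightarrow> bool" where
  "pos_def_mat A \<longleftrightarrow> sym_mat A \<and> (\<forall>x. x \<noteq> 0 \<longrightarrow> x \<bullet> (A *v x) > 0)"

definition is_eigenvector :: "real^'n^'n \<Rightarrow> real^'n \<Rightarrow> bool" where
  "is_eigenvector A v \<longleftrightarrow> v \<noteq> 0 \<and> (\<exists>c. A *v v = c *\<^sub>R v)"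

definition real_eigenvalues :: "real^'n^'n \<Rightarrow> real set" where
  "real_eigenvalues A = {c. \<exists>v. v \<noteq> 0 \<and> A *v v = c *\<^sub>R v}"

end

theory Submission imports Defs begin

text \<open>Write \<open>R\<^sub>e\<close> for \<open>rot180 e\<close>, so \<open>R\<^sub>e x = 2 (e \<bullet> x) e - x\<close>. If \<open>x, y\<close> are eigenvectors of
  \<open>U\<close> for distinct eigenvalues \<open>a, b\<close> and \<open>V = R\<^sub>e U R\<^sub>e\<close> commutes with \<open>U\<close>, then
  \<open>x \<bullet> V y = 0\<close>; expanding \<open>R\<^sub>e\<close> gives \<open>x \<bullet> V y = 2 (e \<bullet> x) (e \<bullet> y) (2 e \<bullet> U e - a - b)\<close>.
  For three distinct eigenvalues \<open>a\<^sub>1, a\<^sub>2, a\<^sub>3\<close> the last factor cannot vanish for both pairs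
  \<open>(a\<^sub>1, a\<^sub>2)\<close> and \<open>(a\<^sub>1, a\<^sub>3)\<close>, so \<open>e\<close> is orthogonal to some unit eigenvector \<open>w\<close>.
  Then \<open>f = e \<times> w\<close> satisfies \<open>R\<^sub>f = R\<^sub>e R\<^sub>w = R\<^sub>w R\<^sub>e\<close>, and \<open>R\<^sub>w\<close> commutes with \<open>U\<close>, whence
  \<open>R\<^sub>f U R\<^sub>f = R\<^sub>e (R\<^sub>w U R\<^sub>w) R\<^sub>e = R\<^sub>e U R\<^sub>e\<close>.\<close>

lemma outer_mult_vector: "outer a b *v x = (b \<bullet> x) *\<^sub>R a"
  by (simp add: outer_def vec_eq_iff matrix_vector_mult_def inner_vec_def sum_distrib_left
      algebra_simps)

lemma rot180_mult_vector: "rot180 e *v x = (2 * (e \<bullet> x)) *\<^sub>R e - x"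
  by (simp add: rot180_def matrix_vector_mult_diff_rdistrib
      scaleR_matrix_vector_assoc[symmetric] outer_mult_vector)

lemma rot180_uminus: "rot180 (- e) = rot180 e"
  by (simp add: rot180_def outer_def)

lemma sym_mat_rot180: "sym_mat (rot180 e)"
  by (simp add: sym_mat_def rot180_def outer_def transpose_def vec_eq_iff mat_def)

lemma sym_mat_inner_commute:
  assumes "sym_mat A"
  shows "(A *v x) \<bullet> y = x \<bullet> (A *v y)"
  by (metis assms sym_mat_def transpose_matrix_vector dot_lmul_matrix)

lemma rot180_mult_rot180:
  assumes "norm e = 1"
  shows "rot180 e ** rot180 e = mat 1"
proof (rule matrix_eq[THEN iffD2], intro allI)
  fix x
  have "e \<bullet> e = 1" using assms by (simp add: dot_square_norm)
  then have "e \<bullet> (rot180 e *v x) = e \<bullet> x"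
    by (simp add: rot180_mult_vector inner_diff_right)
  then show "(rot180 e ** rot180 e) *v x = mat 1 *v x"
    by (simp add: matrix_vector_mul_assoc[symmetric] rot180_mult_vector)
qed

lemma eigenvectors_orthogonal:
  assumes "sym_mat A" "A *v x = a *\<^sub>R x" "A *v y = b *\<^sub>R y" "a \<noteq> b"
  shows "x \<bullet> y = 0"
proof -
  have "a * (x \<bullet> y) = b * (x \<bullet> y)"
    using sym_mat_inner_commute[OF assms(1), of x y] assms(2,3) by simp
  with assms(4) show ?thesis by simp
qed

lemma commuting_mat_eigenvectors_inner:
  assumes "sym_mat U" "U ** V = V ** U"
    and "U *v x = a *\<^sub>R x" "U *v y = b *\<^sub>R y" "a \<noteq> b"
  shows "x \<bullet> (V *v y) = 0"
proof -
  have "a * (x \<bullet> (V *v y)) = x \<bullet> ((U ** V) *v y)"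
    by (metis assms(1,3) sym_mat_inner_commute matrix_vector_mul_assoc inner_scaleR_left)
  also have "\<dots> = b * (x \<bullet> (V *v y))"
    by (metis assms(2,4) matrix_vector_mul_assoc matrix_vector_mult_scaleR inner_scaleR_right)
  finally show ?thesis using assms(5) by simp
qed

lemma eigenvectors_inner_rot180_conj:
  assumes "sym_mat U" "U *v x = a *\<^sub>R x" "U *v y = b *\<^sub>R y" "x \<bullet> y = 0"
  shows "x \<bullet> ((rot180 e ** U ** rot180 e) *v y)
           = 2 * (e \<bullet> x) * (e \<bullet> y) * (2 * (e \<bullet> (U *v e)) - a - b)"
proof -
  have xUe: "x \<bullet> (U *v e) = a * (e \<bullet> x)"
    by (metis assms(1,2) sym_mat_inner_commute inner_scaleR_left inner_commute)
  have "x \<bullet> ((rot180 e ** U ** rot180 e) *v y) = (rot180 e *v x) \<bullet> (U *v (rot180 e *v y))"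
    by (simp add: matrix_vector_mul_assoc[symmetric] sym_mat_inner_commute[OF sym_mat_rot180])
  also have "\<dots> = ((2 * (e \<bullet> x)) *\<^sub>R e - x) \<bullet> ((2 * (e \<bullet> y)) *\<^sub>R (U *v e) - b *\<^sub>R y)"
    by (simp add: rot180_mult_vector matrix_vector_mult_diff_distrib matrix_vector_mult_scaleR
        assms(3))
  also have "\<dots> = 2 * (e \<bullet> x) * (e \<bullet> y) * (2 * (e \<bullet> (U *v e)) - a - b)"
    by (simp add: inner_diff_left inner_diff_right xUe assms(4) inner_commute[of y e]
        algebra_simps)
  finally show ?thesis .
qed

lemma exists_eigenvector_orthogonal_rot180_axis:
  fixes U :: "real^'n^'n"
  assumes "sym_mat U" "3 \<le> card (real_eigenvalues U)"
    and "U ** (rot180 e ** U ** rot180 e) = (rot180 e ** U ** rot180 e) ** U"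
  shows "\<exists>v. is_eigenvector U v \<and> v \<bullet> e = 0"
proof -
  obtain S where "S \<subseteq> real_eigenvalues U" "card S = 3"
    using obtain_subset_with_card_n[OF assms(2)] by metis
  then obtain a1 a2 a3 where "{a1, a2, a3} \<subseteq> real_eigenvalues U"
    and ne: "a1 \<noteq> a2" "a2 \<noteq> a3" "a1 \<noteq> a3"
    by (metis card_3_iff)
  then obtain v1 v2 v3 where v: "v1 \<noteq> 0" "v2 \<noteq> 0" "v3 \<noteq> 0"
    and Uv: "U *v v1 = a1 *\<^sub>R v1" "U *v v2 = a2 *\<^sub>R v2" "U *v v3 = a3 *\<^sub>R v3"
    unfolding real_eigenvalues_def by auto
  have vanish: "(e \<bullet> x) * (e \<bullet> y) * (2 * (e \<bullet> (U *v e)) - a - b) = 0"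
    if "U *v x = a *\<^sub>R x" "U *v y = b *\<^sub>R y" "a \<noteq> b" for x y a b
    using eigenvectors_inner_rot180_conj[OF assms(1) that(1,2)
        eigenvectors_orthogonal[OF assms(1) that]]
      commuting_mat_eigenvectors_inner[OF assms(1,3) that]
    by simp
  have "e \<bullet> v1 = 0 \<or> e \<bullet> v2 = 0 \<or> e \<bullet> v3 = 0"
    using vanish[OF Uv(1,2) ne(1)] vanish[OF Uv(1,3) ne(3)] ne(2) by auto
  with v Uv show ?thesis
    unfolding is_eigenvector_def by (metis inner_commute)
qed

lemma rot180_commute_eigenvector:
  assumes "sym_mat U" "U *v w = a *\<^sub>R w"
  shows "rot180 w ** U = U ** rot180 w"
proof (rule matrix_eq[THEN iffD2], intro allI)
  fix x
  have "w \<bullet> (U *v x) = a * (w \<bullet> x)"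
    by (metis assms sym_mat_inner_commute inner_scaleR_left)
  then show "(rot180 w ** U) *v x = (U ** rot180 w) *v x"
    by (simp add: matrix_vector_mul_assoc[symmetric] rot180_mult_vector
        matrix_vector_mult_diff_distrib matrix_vector_mult_scaleR assms(2))
qed

lemma rot180_conj_eigenvector:
  assumes "sym_mat U" "U *v w = a *\<^sub>R w" "norm w = 1"
  shows "rot180 w ** U ** rot180 w = U"
  by (simp add: rot180_commute_eigenvector[OF assms(1,2)] matrix_mul_assoc[symmetric]
      rot180_mult_rot180[OF assms(3)])

lemma norm_cross3_orthonormal:
  assumes "norm e = 1" "norm w = 1" "e \<bullet> w = 0"
  shows "norm (cross3 e w) = 1"
  using norm_cross[of e w] assms norm_ge_zero[of "cross3 e w"] by (simp add: power2_eq_1_iff)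

lemma orthonormal_expansion_cross3:
  assumes "norm e = 1" "norm w = 1" "e \<bullet> w = 0"
  shows "(cross3 e w \<bullet> x) *\<^sub>R cross3 e w = x - (e \<bullet> x) *\<^sub>R e - (w \<bullet> x) *\<^sub>R w"
proof -
  define f where "f = cross3 e w"
  have ee: "e \<bullet> e = 1" and ww: "w \<bullet> w = 1" and ff: "f \<bullet> f = 1"
    using assms norm_cross3_orthonormal[OF assms] by (simp_all add: dot_square_norm f_def)
  have "cross3 f (cross3 x f) = x - (f \<bullet> x) *\<^sub>R f"
    using Lagrange[of f x f] ff by (simp add: inner_commute)
  moreover have "cross3 x f = (w \<bullet> x) *\<^sub>R e - (e \<bullet> x) *\<^sub>R w"
    using Lagrange[of x e w] by (simp add: f_def inner_commute)
  moreover have "cross3 f e = w" "cross3 f w = - e"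
    using Lagrange[of e e w] Lagrange[of w e w] ee ww assms(3)
    by (simp_all add: f_def cross_skew[of "cross3 e w"] inner_commute)
  ultimately have "x - (f \<bullet> x) *\<^sub>R f = (w \<bullet> x) *\<^sub>R w + (e \<bullet> x) *\<^sub>R e"
    by (simp add: Cross3.right_diff_distrib cross_mult_right)
  then show ?thesis
    by (simp add: f_def algebra_simps)
qed

lemma rot180_mult_rot180_orthogonal:
  assumes "norm e = 1" "norm w = 1" "e \<bullet> w = 0"
  shows "rot180 e ** rot180 w = rot180 (cross3 e w)"
proof (rule matrix_eq[THEN iffD2], intro allI)
  fix x
  have "e \<bullet> (rot180 w *v x) = - (e \<bullet> x)"
    using assms(3) by (simp add: rot180_mult_vector inner_diff_right)
  then have "rot180 e *v (rot180 w *v x) = x - (2 * (e \<bullet> x)) *\<^sub>R e - (2 * (w \<bullet> x)) *\<^sub>R w"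
    by (simp add: rot180_mult_vector algebra_simps)
  also have "\<dots> = 2 *\<^sub>R (x - (e \<bullet> x) *\<^sub>R e - (w \<bullet> x) *\<^sub>R w) - x"
    by (simp add: scaleR_diff_right scaleR_2)
  also have "\<dots> = rot180 (cross3 e w) *v x"
    unfolding rot180_mult_vector scaleR_scaleR[symmetric] orthonormal_expansion_cross3[OF assms] ..
  finally show "(rot180 e ** rot180 w) *v x = rot180 (cross3 e w) *v x"
    by (simp add: matrix_vector_mul_assoc[symmetric])
qed

lemma rot180_conj_cross3_eigenvector:
  assumes "sym_mat U" "U *v w = a *\<^sub>R w" "norm e = 1" "norm w = 1" "e \<bullet> w = 0"
  shows "rot180 (cross3 e w) ** U ** rot180 (cross3 e w) = rot180 e ** U ** rot180 e"
proof -
  have "rot180 (cross3 e w) = rot180 w ** rot180 e"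
    using rot180_mult_rot180_orthogonal[of w e] assms(3-5)
    by (simp add: inner_commute cross_skew[of w] rot180_uminus)
  then have "rot180 (cross3 e w) ** U ** rot180 (cross3 e w)
      = rot180 e ** (rot180 w ** U ** rot180 w) ** rot180 e"
    unfolding rot180_mult_rot180_orthogonal[OF assms(3-5), symmetric]
    by (simp add: matrix_mul_assoc)
  then show ?thesis
    by (simp add: rot180_conj_eigenvector[OF assms(1,2,4)])
qed

theorem mainTheorem1:
  fixes U V :: "real^3^3" and e :: "real^3"
  assumes "pos_def_mat U" and "pos_def_mat V"
    and "U \<noteq> V" and "U ** V = V ** U"
    and "card (real_eigenvalues U) = 3"
    and "norm e = 1"
    and "V = rot180 e ** U ** rot180 e"
  shows "(\<exists>v. is_eigenvector U v \<and> v \<bullet> e = 0) \<and>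
         (\<exists>e'. norm e' = 1 \<and> e' \<bullet> e = 0 \<and> V = rot180 e' ** U ** rot180 e')"
proof -
  have sym: "sym_mat U"
    using assms(1) by (simp add: pos_def_mat_def)
  obtain v where v: "is_eigenvector U v" "v \<bullet> e = 0"
    using exists_eigenvector_orthogonal_rot180_axis[OF sym] assms(4,5,7) by auto
  then obtain a where "v \<noteq> 0" "U *v v = a *\<^sub>R v"
    unfolding is_eigenvector_def by blast
  then have w: "norm (sgn v) = 1" "U *v sgn v = a *\<^sub>R sgn v" "e \<bullet> sgn v = 0"
    using v(2) by (simp_all add: norm_sgn sgn_div_norm matrix_vector_mult_scaleR inner_commute)
  have "norm (cross3 e (sgn v)) = 1" "cross3 e (sgn v) \<bullet> e = 0"
    using norm_cross3_orthonormal[OF assms(6) w(1,3)] dot_cross_self(1)[of e]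
    by (simp_all add: inner_commute)
  moreover have "V = rot180 (cross3 e (sgn v)) ** U ** rot180 (cross3 e (sgn v))"
    using rot180_conj_cross3_eigenvector[OF sym w(2) assms(6) w(1,3)] assms(7) by simp
  ultimately show ?thesis
    using v by blast
qed

end
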